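(* Let $X$ be an infinite regular space. Then there exists a sequence $(G_n)_{n=1}^\infty$ of pairwise disjoint infinite open subsets of $X$.
   Context: Regular spaces are assumed to be $T_1$ (points are closed). *)

theory Defs
  imports "HOL-Analysis.Analysis"
begin

end

theory Submission
  imports Defs
begin

text \<open>Two distinct points of an infinite open set W have disjoint open neighbourhoods U and V.
  If V \<inter> W is infinite, then U \<inter> W and V \<inter> W split W into a nonempty and an infinite open
  part; otherwise V \<inter> W is finite, hence closed, and W - V is the infinite part. Repeating the
  split inside the infinite part yields infinitely many pairwise disjoint nonempty open sets,
  which are then grouped along a pairing of nat into infinitely many infinite unions.\<close>

lemma Hausdorff_space_split_infinite_openin:
  assumes "Hausdorff_space X" "openin X W" "infinite W"
  obtains A W' where "openin X A" "A \<noteq> {}" "openin X W'" "infinite W'"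
    "A \<subseteq> W" "W' \<subseteq> W" "disjnt A W'"
proof -
  obtain x y where xy: "x \<in> W" "y \<in> W" "x \<noteq> y"
    using \<open>infinite W\<close>
    by (metis finite.emptyI finite_insert ex_in_conv Diff_iff singletonI Diff_infinite_finite)
  have "W \<subseteq> topspace X"
    using \<open>openin X W\<close> openin_subset by blast
  then obtain U V where UV: "openin X U" "openin X V" "x \<in> U" "y \<in> V" "disjnt U V"
    using assms(1) xy unfolding Hausdorff_space_def by (metis subsetD)
  show thesis
  proof (cases "finite (V \<inter> W)")
    case True
    then have "closedin X (V \<inter> W)"
      using Hausdorff_imp_t1_space[OF assms(1)] \<open>W \<subseteq> topspace X\<close>
      unfolding t1_space_closedin_finite by blast
    then have "openin X (W - V \<inter> W)"
      using \<open>openin X W\<close> by (simp add: openin_diff)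
    moreover have "infinite (W - V \<inter> W)"
      using True \<open>infinite W\<close> by simp
    moreover have "V \<inter> W \<noteq> {}"
      using UV(4) xy(2) by blast
    ultimately show thesis
      using UV(2) \<open>openin X W\<close>
      by (intro that[of "V \<inter> W" "W - V \<inter> W"]) (auto simp: disjnt_def)
  next
    case False
    moreover have "U \<inter> W \<noteq> {}"
      using UV(3) xy(1) by blast
    moreover have "disjnt (U \<inter> W) (V \<inter> W)"
      using UV(5) by (auto simp: disjnt_def)
    ultimately show thesis
      using UV(1,2) \<open>openin X W\<close> by (intro that[of "U \<inter> W" "V \<inter> W"]) auto
  qed
qed

lemma infinite_Hausdorff_space_disjoint_family_openin:
  assumes "Hausdorff_space X" "infinite (topspace X)"
  obtains H :: "nat \<Rightarrow> 'a set"
  where "\<And>n. openin X (H n)" "\<And>n. H n \<noteq> {}" "disjoint_family H"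
proof -
  define P where "P n p \<longleftrightarrow> openin X (fst p) \<and> fst p \<noteq> {} \<and>
    openin X (snd p) \<and> infinite (snd p) \<and> disjnt (fst p) (snd p)"
    for n :: nat and p :: "'a set \<times> 'a set"
  define Q where "Q n p p' \<longleftrightarrow> fst p' \<subseteq> snd p \<and> snd p' \<subseteq> snd p"
    for n :: nat and p p' :: "'a set \<times> 'a set"
  have "\<exists>p. P 0 p"
  proof -
    obtain A W where "openin X A" "A \<noteq> {}" "openin X W" "infinite W" "disjnt A W"
      using Hausdorff_space_split_infinite_openin[OF assms(1) openin_topspace assms(2)] .
    then show ?thesis
      by (intro exI[of _ "(A, W)"]) (simp add: P_def)
  qed
  moreover have "\<exists>p'. P (Suc n) p' \<and> Q n p p'" if "P n p" for n p
  proof -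
    obtain A W where "openin X A" "A \<noteq> {}" "openin X W" "infinite W"
        "A \<subseteq> snd p" "W \<subseteq> snd p" "disjnt A W"
      using Hausdorff_space_split_infinite_openin[OF assms(1)] \<open>P n p\<close> unfolding P_def by metis
    then show ?thesis
      by (intro exI[of _ "(A, W)"]) (simp add: P_def Q_def)
  qed
  ultimately obtain f where f: "\<And>n. P n (f n) \<and> Q n (f n) (f (Suc n))"
    using dependent_nat_choice[of P Q] by blast
  define A where "A n = fst (f n)" for n
  define W where "W n = snd (f n)" for n
  have PA: "openin X (A n)" "A n \<noteq> {}" "disjnt (A n) (W n)" for n
    using f[of n] unfolding P_def A_def W_def by auto
  have QA: "A (Suc n) \<subseteq> W n" "W (Suc n) \<subseteq> W n" for n
    using f[of n] unfolding Q_def A_def W_def by auto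
  have disjnt_less: "disjnt (A m) (A n)" if "m < n" for m n
  proof -
    obtain k where n: "n = Suc (m + k)"
      using less_imp_Suc_add[OF \<open>m < n\<close>] by blast
    have "W (m + k) \<subseteq> W m"
      using lift_Suc_antimono_le[of W m "m + k"] QA(2) by simp
    then have "A n \<subseteq> W m"
      using QA(1)[of "m + k"] n by simp
    then show ?thesis
      using PA(3)[of m] by (auto simp: disjnt_def)
  qed
  have "disjoint_family A"
    unfolding disjoint_family_on_def
  proof (intro ballI impI)
    fix m n :: nat
    assume "m \<noteq> n"
    then consider "m < n" | "n < m"
      by linarith
    then show "A m \<inter> A n = {}"
      using disjnt_less by cases (auto simp: disjnt_def)
  qed
  then show thesis
    using that PA(1,2) by blast
qed

lemma disjoint_family_prod_encode_blocks:
  fixes H :: "nat \<Rightarrow> 'a set"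
  assumes "\<And>n. H n \<noteq> {}" "disjoint_family H"
  shows "disjoint_family (\<lambda>n. \<Union>j. H (prod_encode (n, j)))"
    and "infinite (\<Union>j. H (prod_encode (n, j)))"
proof -
  show "disjoint_family (\<lambda>n. \<Union>j. H (prod_encode (n, j)))"
    unfolding disjoint_family_on_def
  proof (intro ballI impI)
    fix m n :: nat
    assume "m \<noteq> n"
    then have "H (prod_encode (m, i)) \<inter> H (prod_encode (n, j)) = {}" for i j
      using assms(2) unfolding disjoint_family_on_def by simp
    then show "(\<Union>i. H (prod_encode (m, i))) \<inter> (\<Union>j. H (prod_encode (n, j))) = {}"
      by blast
  qed
  have "disjoint_family (\<lambda>j. H (prod_encode (n, j)))"
    using assms(2) unfolding disjoint_family_on_def by simp
  then show "infinite (\<Union>j. H (prod_encode (n, j)))"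
    using infinite_disjoint_family_imp_infinite_UNION[of UNIV "\<lambda>j. H (prod_encode (n, j))"] assms(1)
    by simp
qed

theorem lemma5p2:
  fixes X :: "'a topology"
  assumes "t1_space X" and "regular_space X" and "infinite (topspace X)"
  shows "\<exists>G :: nat \<Rightarrow> 'a set. (\<forall>n. openin X (G n) \<and> infinite (G n)) \<and>
           (\<forall>m n. m \<noteq> n \<longrightarrow> disjnt (G m) (G n))"
proof -
  have "Hausdorff_space X"
    using assms(1,2) regular_t1_imp_Hausdorff_space by blast
  then obtain H :: "nat \<Rightarrow> 'a set" where H: "\<And>n. openin X (H n)" "\<And>n. H n \<noteq> {}" "disjoint_family H"
    using infinite_Hausdorff_space_disjoint_family_openin assms(3) by blast
  define G where "G n = (\<Union>j. H (prod_encode (n, j)))" for n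
  have "openin X (G n)" for n
    unfolding G_def using H(1) by (intro openin_Union) blast
  moreover have "infinite (G n)" "disjoint_family G" for n
    unfolding G_def using disjoint_family_prod_encode_blocks[OF H(2,3)] by blast+
  ultimately show ?thesis
    unfolding disjoint_family_on_def disjnt_def by blast
qed

end
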